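(* Let $\sigma$ be a strongly convex rational polyhedral cone with $\operatorname{ns}(\sigma)>0$. Then there is a unique face $\tau$ of $\sigma$ which is minimal (with respect to inclusion) among the faces $\tau'$ of $\sigma$ satisfying $\operatorname{ns}(\tau')=\operatorname{ns}(\sigma)$.
   Context: For a strongly convex rational polyhedral cone $\sigma\subset\mathbb{R}^n$, $\sigma(1)$ denotes its set of rays (one-dimensional faces) and $\dim\sigma$ the dimension of the linear subspace spanned by $\sigma$. The non-simplicial index of $\sigma$ is $\operatorname{ns}(\sigma)=|\sigma(1)|-\dim\sigma$; thus $\sigma$ is simplicial iff $\operatorname{ns}(\sigma)=0$. *)

theory Defs
  imports "HOL-Analysis.Analysis"
begin

definition rational_vec :: "real ^ 'n \<Rightarrow> bool" where
  "rational_vec v \<longleftrightarrow> (\<forall>i. v $ i \<in> \<rat>)"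

definition rat_poly_cone :: "(real ^ 'n) set \<Rightarrow> bool" where
  "rat_poly_cone \<sigma> \<longleftrightarrow> (\<exists>V. finite V \<and> (\<forall>v\<in>V. rational_vec v) \<and>
      \<sigma> = {x. \<exists>c. (\<forall>v\<in>V. c v \<ge> 0) \<and> x = (\<Sum>v\<in>V. c v *\<^sub>R v)})"

definition strongly_convex :: "(real ^ 'n) set \<Rightarrow> bool" where
  "strongly_convex \<sigma> \<longleftrightarrow> \<sigma> \<inter> uminus ` \<sigma> = {0}"

definition rays :: "(real ^ 'n) set \<Rightarrow> (real ^ 'n) set set" where
  "rays \<sigma> = {\<rho>. \<rho> face_of \<sigma> \<and> dim \<rho> = 1}"

definition ns :: "(real ^ 'n) set \<Rightarrow> int" where
  "ns \<sigma> = int (card (rays \<sigma>)) - int (dim \<sigma>)"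

end

theory Submission imports Defs begin

(* A rational polyhedral cone is a polyhedron, and a strongly
   convex one is pointed; faces of a pointed polyhedral cone are again such
   cones.  Two facts drive the argument:
   (1) a pointed polyhedral cone is spanned by its rays (induction on the
       dimension: every point lies in the span of the relative boundary, which
       is covered by facets, to which the induction hypothesis applies);
   (2) hence ns(tau) = |R| - dim(span(Union R)) for R = rays(tau), and the
       rays of a face tau are exactly the rays of sigma contained in tau.
   The "nullity" |R| - dim(span(Union R)) of a family of lines is monotone and
   supermodular (dimension of a sum of subspaces).  Consequently the faces tau
   with ns(tau) = ns(sigma) form a finite family containing sigma that is
   closed under intersection, and such a family has a unique minimal member. *)

definition pointed :: "'a::real_vector set \<Rightarrow> bool" where
  "pointed C \<longleftrightarrow> (\<forall>x\<in>C. -x \<in> C \<longrightarrow> x = 0)"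

lemma strongly_convex_imp_pointed:
  "strongly_convex \<sigma> \<Longrightarrow> pointed \<sigma>"
  unfolding strongly_convex_def pointed_def by (metis IntI image_eqI minus_minus singletonD)

text \<open>Finitely generated cones: the explicit nonnegative combinations are the
  convex cone hull, which gives access to the library facts on polyhedra.\<close>

lemma nonneg_combination_in_convex_cone:
  assumes "convex_cone S" "finite V" "V \<subseteq> S" "\<And>v. v \<in> V \<Longrightarrow> c v \<ge> 0"
  shows "(\<Sum>v\<in>V. c v *\<^sub>R v) \<in> S"
  using assms(2-4)
proof (induction V rule: finite_induct)
  case empty
  then show ?case using assms(1) convex_cone_contains_0 by simp
next
  case (insert a F)
  then have "c a *\<^sub>R a \<in> S" using assms(1) by (simp add: convex_cone_def conic_mul)
  moreover have "(\<Sum>v\<in>F. c v *\<^sub>R v) \<in> S" using insert by auto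
  ultimately show ?case using insert assms(1) by (simp add: convex_cone_add)
qed

lemma nonneg_combinations_eq_convex_cone_hull:
  assumes "finite V"
  shows "{x. \<exists>c. (\<forall>v\<in>V. c v \<ge> 0) \<and> x = (\<Sum>v\<in>V. c v *\<^sub>R v)} = convex_cone hull V"
    (is "?S = _")
proof
  show "?S \<subseteq> convex_cone hull V"
    using nonneg_combination_in_convex_cone[OF convex_cone_convex_cone_hull assms hull_subset]
    by blast
next
  have "convex_cone ?S"
    unfolding convex_cone_iff
  proof (intro conjI ballI allI impI)
    show "0 \<in> ?S" by (auto intro: exI[of _ "\<lambda>_. 0"])
  next
    fix x y assume "x \<in> ?S" "y \<in> ?S"
    then obtain c d where "\<forall>v\<in>V. c v \<ge> 0" "x = (\<Sum>v\<in>V. c v *\<^sub>R v)"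
      and "\<forall>v\<in>V. d v \<ge> 0" "y = (\<Sum>v\<in>V. d v *\<^sub>R v)" by blast
    then show "x + y \<in> ?S"
      by (auto simp: scaleR_add_left sum.distrib intro!: exI[of _ "\<lambda>v. c v + d v"])
  next
    fix x and t :: real assume "x \<in> ?S" "0 \<le> t"
    then obtain c where "\<forall>v\<in>V. c v \<ge> 0" "x = (\<Sum>v\<in>V. c v *\<^sub>R v)" by blast
    with \<open>0 \<le> t\<close> show "t *\<^sub>R x \<in> ?S"
      by (auto simp: scaleR_sum_right intro!: exI[of _ "\<lambda>v. t * c v"])
  qed
  moreover have "V \<subseteq> ?S"
  proof
    fix w assume "w \<in> V"
    have "(\<Sum>v\<in>V. (if v = w then 1 else 0) *\<^sub>R v) = (\<Sum>v\<in>V. if v = w then v else 0)"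
      by (rule sum.cong) auto
    also have "\<dots> = w" using \<open>w \<in> V\<close> assms by simp
    finally have "(\<Sum>v\<in>V. (if v = w then 1 else 0) *\<^sub>R v) = w" .
    then show "w \<in> ?S" by (auto intro!: exI[of _ "\<lambda>v. if v = w then 1 else 0"])
  qed
  ultimately show "convex_cone hull V \<subseteq> ?S" by (rule hull_minimal[rotated])
qed

lemma rat_poly_cone_imp_polyhedral_cone:
  assumes "rat_poly_cone \<sigma>"
  shows "polyhedron \<sigma>" "conic \<sigma>" "convex \<sigma>"
proof -
  obtain V where "finite V" "\<sigma> = {x. \<exists>c. (\<forall>v\<in>V. c v \<ge> 0) \<and> x = (\<Sum>v\<in>V. c v *\<^sub>R v)}"
    using assms unfolding rat_poly_cone_def by blast
  then have V: "finite V" "\<sigma> = convex_cone hull V"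
    using nonneg_combinations_eq_convex_cone_hull by auto
  show "polyhedron \<sigma>" using polyhedron_convex_cone_hull[OF V(1)] V(2) by simp
  show "conic \<sigma>" "convex \<sigma>"
    using conic_convex_cone_hull convex_convex_cone_hull V(2) by auto
qed

lemma face_of_pointed_polyhedral_cone:
  fixes C :: "'a::euclidean_space set"
  assumes "polyhedron C" "conic C" "pointed C" "F face_of C"
  shows "polyhedron F" "conic F" "pointed F"
  using face_of_polyhedron_polyhedron[OF assms(1,4)] face_of_conic[OF assms(2,4)]
    assms(3) face_of_imp_subset[OF assms(4)] by (auto simp: pointed_def)

text \<open>In a closed pointed cone, moving from any point in the direction of a
  nonzero element v of the cone backwards eventually leaves the cone;
  otherwise -v would be a limit of points of the cone.\<close>

lemma pointed_cone_leaves_backwards: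
  fixes C :: "'a::euclidean_space set"
  assumes cl: "closed C" and co: "conic C" and pt: "pointed C" and v: "v \<in> C" "v \<noteq> 0"
  shows "\<exists>s>0. x - s *\<^sub>R v \<notin> C"
proof (rule ccontr)
  assume "\<not> ?thesis"
  then have inC: "\<And>s. s > 0 \<Longrightarrow> x - s *\<^sub>R v \<in> C" by blast
  let ?T = "(\<lambda>t. t *\<^sub>R x - v) -` C"
  have "closed ?T"
    by (rule continuous_closed_vimage[OF cl]) (intro continuous_intros)
  moreover have "{0<..1} \<subseteq> ?T"
  proof
    fix t :: real assume "t \<in> {0<..1}"
    then have "t *\<^sub>R (x - (1/t) *\<^sub>R v) \<in> C" "t > 0"
      using conic_mul[OF co inC[of "1/t"]] by auto
    then show "t \<in> ?T" by (simp add: scaleR_diff_right)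
  qed
  ultimately have "closure {0<..(1::real)} \<subseteq> ?T" using closure_minimal by blast
  moreover have "(0::real) \<in> closure {0<..1}" by simp
  ultimately have "(0::real) \<in> ?T" by blast
  then have "-v \<in> C" by simp
  then show False using pt v by (auto simp: pointed_def)
qed

text \<open>Hence the last point of C on the backwards ray lies on the relative
  boundary of C.\<close>

lemma pointed_cone_reaches_rel_boundary:
  fixes C :: "'a::euclidean_space set"
  assumes cl: "closed C" and co: "conic C" and pt: "pointed C"
    and x: "x \<in> C" and v: "v \<in> C" "v \<noteq> 0"
  shows "\<exists>s\<ge>0. x - s *\<^sub>R v \<in> C - rel_interior C"
proof -
  obtain s0 where s0: "s0 > 0" "x - s0 *\<^sub>R v \<notin> C"
    using pointed_cone_leaves_backwards[OF cl co pt v] by blast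
  define A where "A = {0..s0} \<inter> (\<lambda>s. x - s *\<^sub>R v) -` C"
  have clA: "closed A" unfolding A_def
    by (intro closed_Int closed_atLeastAtMost continuous_closed_vimage[OF cl]) (intro continuous_intros)
  have bA: "bdd_above A" unfolding A_def by (rule bdd_above_Int1) simp
  define s where "s = Sup A"
  have "0 \<in> A" using x s0 by (simp add: A_def)
  then have "s \<in> A" unfolding s_def using closed_contains_Sup[OF _ bA clA] by blast
  then have s: "0 \<le> s" "s < s0" "x - s *\<^sub>R v \<in> C"
    using s0 by (auto simp: A_def order.order_iff_strict)
  have "x - s *\<^sub>R v \<notin> rel_interior C"
  proof
    assume "x - s *\<^sub>R v \<in> rel_interior C"
    then obtain e where e: "e > 0" "cball (x - s *\<^sub>R v) e \<inter> affine hull C \<subseteq> C"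
      using mem_rel_interior_cball by blast
    define d where "d = min (s0 - s) (e / norm v)"
    have d: "d > 0" "d \<le> s0 - s" "d \<le> e / norm v"
      using s e v by (auto simp: d_def)
    have "d * norm v \<le> e" using d(3) v(2) by (simp add: pos_le_divide_eq)
    then have "x - (s + d) *\<^sub>R v \<in> cball (x - s *\<^sub>R v) e"
      using d(1) by (simp add: dist_norm algebra_simps)
    moreover have "0 \<in> C" using co v conic_contains_0 by blast
    then have "affine hull C = span C" by (simp add: affine_hull_span_0 hull_inc)
    then have "x - (s + d) *\<^sub>R v \<in> affine hull C"
      using x v by (simp add: span_diff span_mul span_base)
    ultimately have "s + d \<in> A" using e d s by (auto simp: A_def)
    then have "s + d \<le> s" unfolding s_def by (rule cSup_upper[OF _ bA])
    then show False using d by simp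
  qed
  then show ?thesis using s by blast
qed

text \<open>A closed pointed cone of dimension at least two lies in the span of its
  relative boundary: reach the boundary once along x from an independent
  point u, and then once along that boundary point from x.\<close>

lemma pointed_cone_in_span_rel_boundary:
  fixes C :: "'a::euclidean_space set"
  assumes cl: "closed C" and co: "conic C" and pt: "pointed C"
    and d: "dim C \<ge> 2" and x: "x \<in> C"
  shows "x \<in> span (C - rel_interior C)"
proof (cases "x = 0")
  case True
  then show ?thesis by (simp add: span_zero)
next
  case False
  have "\<not> C \<subseteq> span {x}"
    using dim_subset[of C "span {x}"] d False by auto
  then obtain u where u: "u \<in> C" "u \<notin> span {x}" by blast
  obtain s where s: "u - s *\<^sub>R x \<in> C - rel_interior C"
    using pointed_cone_reaches_rel_boundary[OF cl co pt u(1) x False] by blast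
  define p where "p = u - s *\<^sub>R x"
  have "p \<noteq> 0"
    using u by (auto simp: p_def span_mul span_base)
  obtain t where t: "x - t *\<^sub>R p \<in> C - rel_interior C"
    using pointed_cone_reaches_rel_boundary[OF cl co pt x _ \<open>p \<noteq> 0\<close>] s by (auto simp: p_def)
  have "x = (x - t *\<^sub>R p) + t *\<^sub>R p" by simp
  also have "\<dots> \<in> span (C - rel_interior C)"
    using t s by (intro span_add span_mul span_base) (auto simp: p_def)
  finally show ?thesis .
qed

lemma rays_of_face:
  assumes "T face_of S"
  shows "rays T = {r \<in> rays S. r \<subseteq> T}"
  using face_of_face[OF assms] by (auto simp: rays_def)

lemma pointed_polyhedral_cone_spanned_by_rays:
  fixes C :: "(real ^ 'n) set"
  assumes "polyhedron C" "conic C" "pointed C"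
  shows "C \<subseteq> span (\<Union>(rays C))"
  using assms
proof (induction "dim C" arbitrary: C rule: less_induct)
  case less
  have cvx: "convex C" using less.prems(1) by (rule polyhedron_imp_convex)
  consider "dim C = 0" | "dim C = 1" | "dim C \<ge> 2" by linarith
  then show ?case
  proof cases
    case 1
    then show ?thesis by (auto simp: span_zero)
  next
    case 2
    then have "C \<in> rays C" using face_of_refl[OF cvx] by (simp add: rays_def)
    then show ?thesis by (meson Union_upper span_superset subset_trans)
  next
    case 3
    have boundary: "C - rel_interior C \<subseteq> span (\<Union>(rays C))"
    proof
      fix y assume "y \<in> C - rel_interior C"
      then obtain F where F: "F facet_of C" "y \<in> F"
        using rel_boundary_of_polyhedron[OF less.prems(1)] by blast
      have Ff: "F face_of C" using F(1) by (rule facet_of_imp_face_of)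
      note F_cone = face_of_pointed_polyhedral_cone[OF less.prems Ff]
      have "0 \<in> F" "0 \<in> C"
        using F(2) conic_contains_0[OF F_cone(2)] face_of_imp_subset[OF Ff] by auto
      moreover have "F \<noteq> C" using F(1) by auto
      ultimately have "dim F < dim C"
        using face_of_aff_dim_lt[OF cvx Ff] by (simp add: aff_dim_zero hull_inc)
      then have "F \<subseteq> span (\<Union>(rays F))" by (rule less.hyps[OF _ F_cone])
      moreover have "span (\<Union>(rays F)) \<subseteq> span (\<Union>(rays C))"
        using rays_of_face[OF Ff] by (intro span_mono) auto
      ultimately show "y \<in> span (\<Union>(rays C))" using F(2) by blast
    qed
    show ?thesis
    proof
      fix x assume "x \<in> C"
      then have "x \<in> span (C - rel_interior C)"
        by (rule pointed_cone_in_span_rel_boundary[OF polyhedron_imp_closed[OF less.prems(1)]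
              less.prems(2,3) 3])
      then show "x \<in> span (\<Union>(rays C))"
        using span_minimal[OF boundary subspace_span] by blast
    qed
  qed
qed

text \<open>The nullity of a family of sets: its cardinality minus the dimension of
  its union.  For families of lines it behaves like the nullity of a matroid.\<close>

definition nullity :: "'a::euclidean_space set set \<Rightarrow> int" where
  "nullity A = int (card A) - int (dim (\<Union>A))"

lemma dim_Un_plus_common_le:
  fixes X Y Z :: "'a::euclidean_space set"
  assumes "Z \<subseteq> span X" "Z \<subseteq> span Y"
  shows "dim (X \<union> Y) + dim Z \<le> dim X + dim Y"
proof -
  have "dim (X \<union> Y) = dim (span (X \<union> Y))" by simp
  also have "span (X \<union> Y) = {x + y |x y. x \<in> span X \<and> y \<in> span Y}" by (rule span_Un)
  finally have "dim (X \<union> Y) = dim {x + y |x y. x \<in> span X \<and> y \<in> span Y}" .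
  moreover have "dim Z \<le> dim (span X \<inter> span Y)" using assms by (intro dim_subset) auto
  moreover have "dim {x + y |x y. x \<in> span X \<and> y \<in> span Y} + dim (span X \<inter> span Y) = dim X + dim Y"
    using dim_sums_Int[OF subspace_span subspace_span, of X Y] by simp
  ultimately show ?thesis by linarith
qed

text \<open>Adding lines never decreases the nullity: each new line raises the
  cardinality by one and the dimension by at most one.\<close>

lemma nullity_mono:
  fixes A B :: "'a::euclidean_space set set"
  assumes "A \<subseteq> B" "finite B" "\<And>r. r \<in> B \<Longrightarrow> dim r = 1"
  shows "nullity A \<le> nullity B"
proof -
  have "nullity A \<le> nullity (A \<union> D)" if "finite D" "D \<subseteq> B" for D
    using that
  proof (induction D rule: finite_induct)
    case empty
    then show ?case by simp
  next
    case (insert r D)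
    show ?case
    proof (cases "r \<in> A \<union> D")
      case True
      then show ?thesis using insert by (simp add: insert_absorb)
    next
      case False
      have "finite A" using assms finite_subset by blast
      then have card: "card (A \<union> insert r D) = card (A \<union> D) + 1"
        using False insert by simp
      have "dim (r \<union> \<Union>(A \<union> D)) + dim ({}::'a set) \<le> dim r + dim (\<Union>(A \<union> D))"
        by (rule dim_Un_plus_common_le) auto
      moreover have "\<Union>(A \<union> insert r D) = r \<union> \<Union>(A \<union> D)" by auto
      ultimately have "dim (\<Union>(A \<union> insert r D)) \<le> dim (\<Union>(A \<union> D)) + 1"
        using insert assms(3) by simp
      then show ?thesis using insert card by (simp add: nullity_def)
    qed
  qed
  moreover have "A \<union> (B - A) = B" using assms(1) by blast
  ultimately show ?thesis using assms(2) by (metis finite_Diff Diff_subset)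
qed

text \<open>Nullity is supermodular, by Grassmann's inequality.\<close>

lemma nullity_supermodular:
  fixes A B :: "'a::euclidean_space set set"
  assumes "finite A" "finite B"
  shows "nullity A + nullity B \<le> nullity (A \<union> B) + nullity (A \<inter> B)"
proof -
  have "dim (\<Union>A \<union> \<Union>B) + dim (\<Union>(A \<inter> B)) \<le> dim (\<Union>A) + dim (\<Union>B)"
    by (rule dim_Un_plus_common_le) (auto intro: span_base)
  then have "dim (\<Union>(A \<union> B)) + dim (\<Union>(A \<inter> B)) \<le> dim (\<Union>A) + dim (\<Union>B)"
    by (simp add: Union_Un_distrib)
  then have "int (dim (\<Union>(A \<union> B))) + int (dim (\<Union>(A \<inter> B))) \<le> int (dim (\<Union>A)) + int (dim (\<Union>B))"
    by (metis of_nat_add of_nat_le_iff)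
  moreover have "int (card (A \<union> B)) + int (card (A \<inter> B)) = int (card A) + int (card B)"
    using card_Un_Int[OF assms] by (metis of_nat_add)
  ultimately show ?thesis unfolding nullity_def by linarith
qed

text \<open>For a pointed polyhedral cone the non-simplicial index is the nullity of
  its family of rays, since the rays span the cone.\<close>

lemma ns_eq_nullity_rays:
  fixes C :: "(real ^ 'n) set"
  assumes "polyhedron C" "conic C" "pointed C"
  shows "ns C = nullity (rays C)"
proof -
  have "\<Union>(rays C) \<subseteq> C" by (auto simp: rays_def dest: face_of_imp_subset)
  moreover have "C \<subseteq> span (\<Union>(rays C))"
    by (rule pointed_polyhedral_cone_spanned_by_rays[OF assms])
  ultimately have "dim C = dim (\<Union>(rays C))"
    by (metis dim_span dim_subset le_antisym)
  then show ?thesis by (simp add: ns_def nullity_def)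
qed

text \<open>The faces of maximal index are closed under intersection: with
  R = rays C, the rays of the faces form subfamilies of R with nullity equal
  to that of R, and supermodularity plus monotonicity force the same for their
  intersection, which is the family of rays of the intersected face.\<close>

lemma ns_Int_faces:
  fixes C :: "(real ^ 'n) set"
  assumes cone: "polyhedron C" "conic C" "pointed C"
    and faces: "T1 face_of C" "T2 face_of C" and ns: "ns T1 = ns C" "ns T2 = ns C"
  shows "ns (T1 \<inter> T2) = ns C"
proof -
  have T12: "(T1 \<inter> T2) face_of C" using face_of_Int[OF faces] .
  have ns_face: "ns T = nullity (rays T)" if "T face_of C" for T
    using ns_eq_nullity_rays face_of_pointed_polyhedral_cone[OF cone that] by blast
  have "finite (rays C)"
    using finite_polyhedron_faces[OF cone(1)] by (rule finite_subset[rotated]) (auto simp: rays_def)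
  moreover have "\<And>r. r \<in> rays C \<Longrightarrow> dim r = 1" by (simp add: rays_def)
  moreover have "rays T1 \<subseteq> rays C" "rays T2 \<subseteq> rays C"
    using rays_of_face faces by auto
  ultimately have
    "nullity (rays T1) + nullity (rays T2) \<le> nullity (rays T1 \<union> rays T2) + nullity (rays T1 \<inter> rays T2)"
    "nullity (rays T1 \<union> rays T2) \<le> nullity (rays C)"
    "nullity (rays T1 \<inter> rays T2) \<le> nullity (rays C)"
    by (auto intro!: nullity_supermodular nullity_mono intro: finite_subset)
  moreover note ns_face[OF face_of_refl[OF polyhedron_imp_convex[OF cone(1)]]]
  ultimately have "nullity (rays T1 \<inter> rays T2) = ns C"
    using ns ns_face[OF faces(1)] ns_face[OF faces(2)] by linarith
  moreover have "rays (T1 \<inter> T2) = rays T1 \<inter> rays T2"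
    using rays_of_face[OF T12] rays_of_face faces by auto
  ultimately show ?thesis using ns_face[OF T12] by simp
qed

lemma unique_minimal_of_Int_closed:
  assumes "finite \<F>" "S \<in> \<F>" "\<And>A B. A \<in> \<F> \<Longrightarrow> B \<in> \<F> \<Longrightarrow> A \<inter> B \<in> \<F>"
  shows "\<exists>!M. M \<in> \<F> \<and> (\<forall>A. A \<in> \<F> \<and> A \<subseteq> M \<longrightarrow> A = M)"
proof -
  obtain M where M: "M \<in> \<F>" "\<And>A. A \<in> \<F> \<Longrightarrow> A \<subseteq> M \<Longrightarrow> M = A"
    using finite_has_minimal[OF assms(1)] assms(2) by blast
  have "M' = M" if "M' \<in> \<F>" "\<forall>A. A \<in> \<F> \<and> A \<subseteq> M' \<longrightarrow> A = M'" for M'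
    using that M assms(3)[of M' M] by (metis inf.cobounded1 inf.cobounded2)
  then show ?thesis using M by blast
qed

theorem lemma3p2:
  fixes \<sigma> :: "(real ^ 'n) set"
  assumes "rat_poly_cone \<sigma>" and "strongly_convex \<sigma>" and "ns \<sigma> > 0"
  shows "\<exists>!\<tau>. \<tau> face_of \<sigma> \<and> ns \<tau> = ns \<sigma> \<and>
           (\<forall>\<tau>'. \<tau>' face_of \<sigma> \<and> ns \<tau>' = ns \<sigma> \<and> \<tau>' \<subseteq> \<tau> \<longrightarrow> \<tau>' = \<tau>)"
proof -
  note cone = rat_poly_cone_imp_polyhedral_cone[OF assms(1)]
  have pt: "pointed \<sigma>" using assms(2) by (rule strongly_convex_imp_pointed)
  define \<F> where "\<F> = {\<tau>. \<tau> face_of \<sigma> \<and> ns \<tau> = ns \<sigma>}"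
  have "finite \<F>"
    using finite_polyhedron_faces[OF cone(1)] by (rule finite_subset[rotated]) (auto simp: \<F>_def)
  moreover have "\<sigma> \<in> \<F>" using face_of_refl[OF cone(3)] by (simp add: \<F>_def)
  moreover have "\<And>A B. A \<in> \<F> \<Longrightarrow> B \<in> \<F> \<Longrightarrow> A \<inter> B \<in> \<F>"
    using ns_Int_faces[OF cone(1,2) pt] face_of_Int by (auto simp: \<F>_def)
  ultimately show ?thesis
    using unique_minimal_of_Int_closed[of \<F> \<sigma>] by (simp add: \<F>_def conj_assoc)
qed

end
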